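(* Let $s>1$ be constant and $G\sim G_{n,p}$ with $p=\frac{\log n+\omega(n)}{n}$, $\omega(n)\to\infty$, $np=O(\log n)$. For the Birth-Death process on $G$ started from a single mutant vertex $v_0$, w.h.p. no vertex of $S_0$ is added to $N(X)$ and no vertex of $N(S_0)$ is added to $X$ during the first $\omega_0^{3/4}$ iterations.
   Context: Birth-Death process: $X\subseteq[n]$ is the mutant set (fitness $s$, others fitness 1), initially $\{v_0\}$; at each step a vertex $v$ is chosen with probability proportional to fitness and a uniformly random neighbor $u$ of $v$ takes the type of $v$. An iteration is a step in which $X$ changes. $N(A)=\{w\notin A:\exists v\in A, vw\in E(G)\}$. $\varepsilon=1/\log\log\log n$, $S_0=\{v:d(v)\le np/10\}$, $\omega_0=\frac{\varepsilon^2 np}{100\log(np)}$. W.h.p. refers to the randomness of both the graph and the process. *)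

theory Defs
  imports Complex_Main "HOL-Library.Landau_Symbols"
begin

text \<open>Graphs on vertex set {0..<n}: an edge set E is a set of 2-element sets {i,j}, i < j < n.\<close>

definition all_pairs :: "nat \<Rightarrow> nat set set" where
  "all_pairs n = {{i, j} | i j. i < j \<and> j < n}"

definition graph_prob :: "nat \<Rightarrow> real \<Rightarrow> nat set set \<Rightarrow> real" where
  "graph_prob n p E = p ^ card E * (1 - p) ^ (card (all_pairs n) - card E)"

definition nbrs :: "nat set set \<Rightarrow> nat \<Rightarrow> nat set" where
  "nbrs E v = {u. {v, u} \<in> E}"

definition deg :: "nat set set \<Rightarrow> nat \<Rightarrow> nat" where
  "deg E v = card (nbrs E v)"

definition bdry :: "nat set set \<Rightarrow> nat set \<Rightarrow> nat set" where
  "bdry E A = {w. w \<notin> A \<and> (\<exists>v\<in>A. {v, w} \<in> E)}"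

definition S0 :: "nat \<Rightarrow> real \<Rightarrow> nat set set \<Rightarrow> nat set" where
  "S0 n p E = {v. v < n \<and> real (deg E v) \<le> real n * p / 10}"

definition fit :: "real \<Rightarrow> nat set \<Rightarrow> nat \<Rightarrow> real" where
  "fit s X v = (if v \<in> X then s else 1)"

text \<open>Result of a Birth-Death step where v reproduces onto its neighbour u.\<close>
definition bd_result :: "nat set \<Rightarrow> nat \<Rightarrow> nat \<Rightarrow> nat set" where
  "bd_result X v u = (if v \<in> X then insert u X else X - {u})"

text \<open>Probability that one step of the Birth-Death process moves mutant set X to Y
  (a chosen vertex without neighbours causes no change).\<close>
definition step_prob :: "nat \<Rightarrow> real \<Rightarrow> nat set set \<Rightarrow> nat set \<Rightarrow> nat set \<Rightarrow> real" where
  "step_prob n s E X Y =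
     (\<Sum>v<n. fit s X v / (\<Sum>w<n. fit s X w) *
        (real (card {u \<in> nbrs E v. bd_result X v u = Y}) / real (deg E v)))"

definition change_prob :: "nat \<Rightarrow> real \<Rightarrow> nat set set \<Rightarrow> nat set \<Rightarrow> real" where
  "change_prob n s E X = (\<Sum>Y \<in> Pow {..<n} - {X}. step_prob n s E X Y)"

text \<open>Transition probability of the chain of iterations (steps in which X changes);
  it is 0 everywhere if X can no longer change (no further iterations).\<close>
definition jump_prob :: "nat \<Rightarrow> real \<Rightarrow> nat set set \<Rightarrow> nat set \<Rightarrow> nat set \<Rightarrow> real" where
  "jump_prob n s E X Y = (if Y = X then 0 else step_prob n s E X Y / change_prob n s E X)"

definition bad_trans :: "nat \<Rightarrow> real \<Rightarrow> nat set set \<Rightarrow> nat set \<Rightarrow> nat set \<Rightarrow> bool" where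
  "bad_trans n p E X Y =
     ((\<exists>w \<in> S0 n p E. w \<in> bdry E Y \<and> w \<notin> bdry E X) \<or>
      (\<exists>w \<in> bdry E (S0 n p E). w \<in> Y \<and> w \<notin> X))"

fun bad_within :: "nat \<Rightarrow> real \<Rightarrow> real \<Rightarrow> nat set set \<Rightarrow> nat \<Rightarrow> nat set \<Rightarrow> real" where
  "bad_within n p s E 0 X = 0"
| "bad_within n p s E (Suc k) X =
     (\<Sum>Y \<in> Pow {..<n}. jump_prob n s E X Y *
        (if bad_trans n p E X Y then 1 else bad_within n p s E k Y))"

definition omega0 :: "nat \<Rightarrow> real \<Rightarrow> real" where
  "omega0 n p = (let eps = 1 / ln (ln (ln (real n))) in
                   eps ^ 2 * (real n * p) / (100 * ln (real n * p)))"

definition failure_prob :: "nat \<Rightarrow> real \<Rightarrow> real \<Rightarrow> nat \<Rightarrow> real" where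
  "failure_prob n p s v0 =
     (\<Sum>E \<in> Pow (all_pairs n). graph_prob n p E *
        bad_within n p s E (nat \<lfloor>omega0 n p powr (3/4)\<rfloor>) {v0})"

end

theory Submission
  imports Defs "HOL-Real_Asymp.Real_Asymp"
begin

text \<open>
  During the first k iterations the mutant set stays within graph distance k of v0, and a
  bad iteration needs a vertex of S0 adjacent to the new mutant set or to the old one. So a
  bad iteration among the first K iterations forces a simple path of length l \<le> K + 1 from v0
  to a vertex of degree at most np/10. The end vertex of a fixed such path has n - l - 1
  potential neighbours off the path, each present independently, so Markov's inequality for
  10^(-deg) bounds the probability of that event by 10^(np/10) p^l (1 - 9p/10)^(n-l-1).
  Summing over the n^l candidate paths gives roughly (np)^(K+2) n^(-2/5), which tends to 0
  because K \<le> \<omega>0^(3/4) \<le> (np)^(3/4) and np = O(log n).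
\<close>

section \<open>Transition probabilities of the iteration chain\<close>

lemma step_prob_nonneg: "s > 0 \<Longrightarrow> 0 \<le> step_prob n s E X Y"
  unfolding step_prob_def fit_def
  by (intro sum_nonneg mult_nonneg_nonneg divide_nonneg_nonneg) auto

lemma change_prob_nonneg: "s > 0 \<Longrightarrow> 0 \<le> change_prob n s E X"
  unfolding change_prob_def by (intro sum_nonneg step_prob_nonneg)

lemma jump_prob_nonneg: "s > 0 \<Longrightarrow> 0 \<le> jump_prob n s E X Y"
  unfolding jump_prob_def using step_prob_nonneg change_prob_nonneg by auto

lemma sum_jump_prob_le_1: "(\<Sum>Y\<in>Pow {..<n}. jump_prob n s E X Y) \<le> 1"
proof -
  have "(\<Sum>Y\<in>Pow {..<n}. jump_prob n s E X Y) = (\<Sum>Y\<in>Pow {..<n} - {X}. jump_prob n s E X Y)"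
    by (rule sum.mono_neutral_right) (auto simp: jump_prob_def)
  also have "\<dots> = (\<Sum>Y\<in>Pow {..<n} - {X}. step_prob n s E X Y / change_prob n s E X)"
    by (rule sum.cong) (auto simp: jump_prob_def)
  also have "\<dots> = change_prob n s E X / change_prob n s E X"
    unfolding change_prob_def by (simp add: sum_divide_distrib[symmetric])
  also have "\<dots> \<le> 1" by (cases "change_prob n s E X = 0") auto
  finally show ?thesis .
qed

lemma bad_within_between_0_1:
  assumes "s > 0"
  shows "0 \<le> bad_within n p s E k X \<and> bad_within n p s E k X \<le> 1"
proof (induction k arbitrary: X)
  case 0 then show ?case by simp
next
  case (Suc k)
  have jump_nonneg: "0 \<le> jump_prob n s E X Y" for Y using jump_prob_nonneg assms by blast
  have next_bounds: "0 \<le> (if bad_trans n p E X Y then 1 else bad_within n p s E k Y) \<and>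
      (if bad_trans n p E X Y then 1 else bad_within n p s E k Y) \<le> (1::real)" for Y
    using Suc.IH by auto
  have "bad_within n p s E (Suc k) X \<le> (\<Sum>Y\<in>Pow {..<n}. jump_prob n s E X Y * 1)"
    by simp (intro sum_mono mult_left_le, use next_bounds jump_nonneg in auto)
  also have "\<dots> \<le> 1" using sum_jump_prob_le_1 by simp
  finally show ?case using jump_nonneg next_bounds by (auto intro!: sum_nonneg)
qed

lemma jump_prob_neq_0_imp_edge_step:
  assumes "jump_prob n s E X Y \<noteq> 0"
  obtains v u where "{v, u} \<in> E" "Y = bd_result X v u"
proof -
  have "step_prob n s E X Y \<noteq> 0" using assms by (auto simp: jump_prob_def split: if_splits)
  then obtain v where "card {u \<in> nbrs E v. bd_result X v u = Y} \<noteq> 0"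
    unfolding step_prob_def
    by (metis (no_types, lifting) divide_eq_0_iff mult_eq_0_iff of_nat_0 sum.neutral)
  then have "{u \<in> nbrs E v. bd_result X v u = Y} \<noteq> {}" by (metis card.empty)
  then show ?thesis using that by (auto simp: nbrs_def)
qed

section \<open>Walks, paths and balls\<close>

fun walk_edges :: "nat \<Rightarrow> nat list \<Rightarrow> nat set set" where
  "walk_edges v [] = {}"
| "walk_edges v (x # xs) = insert {v, x} (walk_edges x xs)"

lemma walk_edges_append:
  "walk_edges v (xs @ ys) = walk_edges v xs \<union> walk_edges (last (v # xs)) ys"
  by (induction xs arbitrary: v) auto

lemma walk_edges_subset_vertices: "e \<in> walk_edges v xs \<Longrightarrow> e \<subseteq> set (v # xs)"
  by (induction xs arbitrary: v) auto

lemma finite_walk_edges: "finite (walk_edges v xs)"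
  by (induction xs arbitrary: v) auto

lemma card_walk_edges: "distinct (v # xs) \<Longrightarrow> card (walk_edges v xs) = length xs"
proof (induction xs arbitrary: v)
  case Nil then show ?case by simp
next
  case (Cons x xs)
  have "{v, x} \<notin> walk_edges x xs"
    using walk_edges_subset_vertices[of "{v, x}" x xs] Cons.prems by auto
  then show ?case using Cons by (simp add: finite_walk_edges)
qed

text \<open>
  The ball of radius \<open>r\<close> around \<open>v\<close>, described through simple paths since these are what the
  union bound below counts.
\<close>
definition path_ball :: "nat set set \<Rightarrow> nat \<Rightarrow> nat \<Rightarrow> nat set" where
  "path_ball E v r =
     {last (v # xs) | xs. walk_edges v xs \<subseteq> E \<and> distinct (v # xs) \<and> length xs \<le> r}"

lemma path_ball_mono: "r \<le> r' \<Longrightarrow> path_ball E v r \<subseteq> path_ball E v r'"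
  unfolding path_ball_def by fastforce

lemma center_in_path_ball: "v \<in> path_ball E v r"
  unfolding path_ball_def by (rule CollectI, rule exI[of _ "[]"]) simp

lemma path_ball_Suc:
  assumes "w \<in> path_ball E v r" "{w, u} \<in> E"
  shows "u \<in> path_ball E v (Suc r)"
proof -
  obtain xs where xs: "w = last (v # xs)" "walk_edges v xs \<subseteq> E" "distinct (v # xs)" "length xs \<le> r"
    using assms(1) unfolding path_ball_def by auto
  show ?thesis
  proof (cases "u \<in> set (v # xs)")
    case False
    then have "walk_edges v (xs @ [u]) \<subseteq> E" "distinct (v # xs @ [u])"
      using xs assms(2) by (auto simp: walk_edges_append)
    then show ?thesis using xs unfolding path_ball_def
      by (intro CollectI exI[of _ "xs @ [u]"]) auto
  next
    case True
    \<comment> \<open>the path already visits \<open>u\<close>: cut it there\<close>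
    then obtain as bs where split: "v # xs = as @ u # bs" by (meson split_list)
    show ?thesis
    proof (cases as)
      case Nil
      then show ?thesis using split center_in_path_ball by auto
    next
      case (Cons a as')
      then have "xs = (as' @ [u]) @ bs" using split by auto
      then have "walk_edges v (as' @ [u]) \<subseteq> E" "distinct (v # as' @ [u])"
        "length (as' @ [u]) \<le> Suc r"
        using xs split Cons by (auto simp: walk_edges_append simp del: append_assoc)
      then show ?thesis unfolding path_ball_def
        by (intro CollectI exI[of _ "as' @ [u]"]) auto
    qed
  qed
qed

section \<open>Bad iterations require a nearby vertex of low degree\<close>

lemma jump_stays_in_path_ball:
  assumes "jump_prob n s E X Y \<noteq> 0" "X \<subseteq> path_ball E v r"
  shows "Y \<subseteq> path_ball E v (Suc r)"
proof -
  obtain x u where xu: "{x, u} \<in> E" "Y = bd_result X x u"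
    using assms(1) by (rule jump_prob_neq_0_imp_edge_step)
  have "X \<subseteq> path_ball E v (Suc r)" using assms(2) path_ball_mono[of r "Suc r"] by auto
  moreover have "u \<in> path_ball E v (Suc r)" if "x \<in> X"
    using path_ball_Suc[OF _ xu(1)] assms(2) that by blast
  ultimately show ?thesis using xu(2) by (auto simp: bd_result_def)
qed

lemma bad_trans_imp_S0_near:
  assumes "bad_trans n p E X Y" "Y \<subseteq> path_ball E v r"
  shows "S0 n p E \<inter> path_ball E v (Suc r) \<noteq> {}"
  using assms(1) unfolding bad_trans_def
proof (elim disjE bexE conjE)
  fix w assume w: "w \<in> S0 n p E" "w \<in> bdry E Y"
  then obtain y where "y \<in> Y" "{y, w} \<in> E" unfolding bdry_def by auto
  then have "w \<in> path_ball E v (Suc r)" using path_ball_Suc assms(2) by blast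
  then show ?thesis using w by blast
next
  fix w assume w: "w \<in> bdry E (S0 n p E)" "w \<in> Y"
  then obtain z where z: "z \<in> S0 n p E" "{w, z} \<in> E" unfolding bdry_def by (auto simp: insert_commute)
  then have "z \<in> path_ball E v (Suc r)" using path_ball_Suc assms(2) w(2) by blast
  then show ?thesis using z by blast
qed

lemma bad_within_eq_0_if_S0_far:
  assumes "X \<subseteq> path_ball E v r" "S0 n p E \<inter> path_ball E v (r + k + 1) = {}"
  shows "bad_within n p s E k X = 0"
  using assms
proof (induction k arbitrary: X r)
  case 0 then show ?case by simp
next
  case (Suc k)
  have "jump_prob n s E X Y * (if bad_trans n p E X Y then 1 else bad_within n p s E k Y) = 0" for Y
  proof (cases "jump_prob n s E X Y = 0")
    case False
    then have Y: "Y \<subseteq> path_ball E v (Suc r)" using jump_stays_in_path_ball Suc.prems(1) by blast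
    have "path_ball E v (Suc (Suc r)) \<subseteq> path_ball E v (r + Suc k + 1)"
      by (rule path_ball_mono) simp
    then have "\<not> bad_trans n p E X Y" using bad_trans_imp_S0_near[OF _ Y] Suc.prems(2) by blast
    moreover have "bad_within n p s E k Y = 0"
      by (rule Suc.IH[OF Y]) (use Suc.prems(2) in simp)
    ultimately show ?thesis by simp
  qed simp
  then show ?case by (simp only: bad_within.simps, intro sum.neutral ballI) simp
qed

section \<open>Probabilities in \<open>G(n,p)\<close>\<close>

lemma sum_Pow_weighted_prod:
  fixes p :: real and h :: "'a \<Rightarrow> bool \<Rightarrow> real"
  assumes "finite U"
  shows "(\<Sum>E\<in>Pow U. p ^ card E * (1 - p) ^ card (U - E) * (\<Prod>e\<in>U. h e (e \<in> E)))
        = (\<Prod>e\<in>U. p * h e True + (1 - p) * h e False)"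
  using assms
proof (induction U rule: finite_induct)
  case empty then show ?case by simp
next
  case (insert a U)
  let ?f = "\<lambda>E. p ^ card E * (1 - p) ^ card (insert a U - E) * (\<Prod>e\<in>insert a U. h e (e \<in> E))"
  let ?g = "\<lambda>E. p ^ card E * (1 - p) ^ card (U - E) * (\<Prod>e\<in>U. h e (e \<in> E))"
  have inj: "inj_on (insert a) (Pow U)" using insert(2) unfolding inj_on_def
    by (metis PowD insert_ident subset_iff)
  have without_a: "?f E = (1 - p) * h a False * ?g E" if "E \<in> Pow U" for E
  proof -
    have "a \<notin> E" using that insert(2) by auto
    then have "card (insert a U - E) = Suc (card (U - E))"
      using insert(1,2) by (simp add: insert_Diff_if)
    then show ?thesis using \<open>a \<notin> E\<close> insert(1,2) by (simp add: prod.insert)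
  qed
  have with_a: "?f (insert a E) = p * h a True * ?g E" if "E \<in> Pow U" for E
  proof -
    have "a \<notin> E" "finite E" using that insert(1,2) finite_subset by auto
    moreover have "insert a U - insert a E = U - E" using insert(2) by auto
    moreover have "(e \<in> insert a E) = (e \<in> E)" if "e \<in> U" for e
      using that insert(2) by auto
    then have "(\<Prod>e\<in>U. h e (e \<in> insert a E)) = (\<Prod>e\<in>U. h e (e \<in> E))"
      by (intro prod.cong refl) simp
    ultimately show ?thesis using insert(1,2) by (simp add: prod.insert)
  qed
  have "(\<Sum>E\<in>Pow (insert a U). ?f E) = (\<Sum>E\<in>Pow U. ?f E) + (\<Sum>E\<in>insert a ` Pow U. ?f E)"
    unfolding Pow_insert using insert(1,2) by (intro sum.union_disjoint) auto
  also have "(\<Sum>E\<in>insert a ` Pow U. ?f E) = (\<Sum>E\<in>Pow U. ?f (insert a E))"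
    by (rule sum.reindex[OF inj, unfolded comp_def])
  also have "(\<Sum>E\<in>Pow U. ?f E) = (1 - p) * h a False * (\<Sum>E\<in>Pow U. ?g E)"
    by (subst sum_distrib_left, rule sum.cong[OF refl], rule without_a)
  also have "(\<Sum>E\<in>Pow U. ?f (insert a E)) = p * h a True * (\<Sum>E\<in>Pow U. ?g E)"
    by (subst sum_distrib_left, rule sum.cong[OF refl], rule with_a)
  finally show ?case using insert by (simp add: prod.insert algebra_simps)
qed

lemma doubleton_in_all_pairs: "a \<noteq> b \<Longrightarrow> a < n \<Longrightarrow> b < n \<Longrightarrow> {a, b} \<in> all_pairs n"
  unfolding all_pairs_def
  by (cases "a < b") (auto, metis insert_commute linorder_neqE_nat)

lemma all_pairs_subset_Pow: "all_pairs n \<subseteq> Pow {..<n}"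
  unfolding all_pairs_def by auto

lemma finite_all_pairs: "finite (all_pairs n)"
  by (rule finite_subset[OF all_pairs_subset_Pow]) simp

lemma walk_edges_subset_all_pairs:
  "distinct (v # xs) \<Longrightarrow> set (v # xs) \<subseteq> {..<n} \<Longrightarrow> walk_edges v xs \<subseteq> all_pairs n"
  by (induction xs arbitrary: v) (auto intro!: doubleton_in_all_pairs)

lemma doubleton_in_all_pairs_less: "{a, b} \<in> all_pairs n \<Longrightarrow> b < n"
  using all_pairs_subset_Pow by blast

lemma walk_vertices_less:
  "walk_edges v xs \<subseteq> E \<Longrightarrow> E \<subseteq> all_pairs n \<Longrightarrow> set xs \<subseteq> {..<n}"
  by (induction xs arbitrary: v) (auto dest: doubleton_in_all_pairs_less)

lemma graph_prob_nonneg: "0 \<le> p \<Longrightarrow> p \<le> 1 \<Longrightarrow> 0 \<le> graph_prob n p E"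
  by (simp add: graph_prob_def)

lemma graph_prob_eq:
  "E \<subseteq> all_pairs n \<Longrightarrow> graph_prob n p E = p ^ card E * (1 - p) ^ card (all_pairs n - E)"
  unfolding graph_prob_def by (simp add: card_Diff_subset finite_subset finite_all_pairs)

lemma sum_graph_prob_contains_weighted:
  assumes P: "P \<subseteq> all_pairs n" and D: "D \<subseteq> all_pairs n" and disj: "P \<inter> D = {}"
  shows "(\<Sum>E\<in>Pow (all_pairs n). graph_prob n p E * (if P \<subseteq> E then c ^ card (D \<inter> E) else 0))
       = p ^ card P * (1 - p + p * c) ^ card D"
proof -
  define U where "U = all_pairs n"
  define h :: "nat set \<Rightarrow> bool \<Rightarrow> real" where
    "h e b = (if e \<in> P then (if b then 1 else 0) else if e \<in> D then (if b then c else 1) else 1)"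
    for e b
  have finU: "finite U" unfolding U_def by (rule finite_all_pairs)
  have finD: "finite D" using D finU finite_subset unfolding U_def by blast
  have prod_h: "(\<Prod>e\<in>U. h e (e \<in> E)) = (if P \<subseteq> E then c ^ card (D \<inter> E) else 0)" for E
  proof (cases "P \<subseteq> E")
    case True
    then have "(\<Prod>e\<in>U. h e (e \<in> E)) = (\<Prod>e\<in>U. if e \<in> D then (if e \<in> E then c else 1) else 1)"
      using disj by (intro prod.cong refl) (auto simp: h_def)
    also have "\<dots> = (\<Prod>e\<in>D. if e \<in> E then c else 1)"
      using finU D by (simp add: prod.If_cases Int_absorb1 U_def)
    also have "\<dots> = c ^ card (D \<inter> E)"
      using finD by (simp add: prod.If_cases)
    finally show ?thesis using True by simp
  next
    case False
    then obtain e where "e \<in> P" "e \<notin> E" by blast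
    then have "e \<in> U" "h e (e \<in> E) = 0" using P by (auto simp: h_def U_def)
    then show ?thesis using False finU by (auto simp: prod_zero_iff)
  qed
  have "(\<Prod>e\<in>U. p * h e True + (1 - p) * h e False)
      = (\<Prod>e\<in>U. if e \<in> P then p else if e \<in> D then 1 - p + p * c else 1)"
    by (rule prod.cong) (auto simp: h_def)
  also have "\<dots> = (\<Prod>e\<in>P. p) * (\<Prod>e\<in>D. 1 - p + p * c)"
  proof -
    have "U \<inter> P = P" "U \<inter> - P \<inter> D = D" using P D disj by (auto simp: U_def)
    then show ?thesis using finU by (simp add: prod.If_cases)
  qed
  finally have expectation: "(\<Prod>e\<in>U. p * h e True + (1 - p) * h e False)
      = p ^ card P * (1 - p + p * c) ^ card D" by simp
  have "(\<Sum>E\<in>Pow U. graph_prob n p E * (if P \<subseteq> E then c ^ card (D \<inter> E) else 0))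
      = (\<Sum>E\<in>Pow U. p ^ card E * (1 - p) ^ card (U - E) * (\<Prod>e\<in>U. h e (e \<in> E)))"
    by (rule sum.cong[OF refl]) (auto simp: prod_h graph_prob_eq[of _ n, folded U_def])
  then show ?thesis using expectation sum_Pow_weighted_prod[OF finU] by (simp add: U_def)
qed

text \<open>
  Markov's inequality for 10^(-deg): the end vertex of the path has n - l - 1 potential
  neighbours off the path, each present with probability p independently of the path.
\<close>
lemma prob_path_with_low_degree_end:
  fixes p m :: real
  assumes p: "0 \<le> p" "p \<le> 1" and dist: "distinct (v # xs)" and vertices: "set (v # xs) \<subseteq> {..<n}"
  shows "(\<Sum>E\<in>Pow (all_pairs n). graph_prob n p E *
            (if walk_edges v xs \<subseteq> E \<and> real (deg E (last (v # xs))) \<le> m then 1 else 0))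
         \<le> 10 powr m * p ^ length xs * (1 - 9 * p / 10) ^ (n - Suc (length xs))"
proof -
  define P where "P = walk_edges v xs"
  define w where "w = last (v # xs)"
  define D where "D = (\<lambda>u. {w, u}) ` ({..<n} - set (v # xs))"
  have w: "w \<in> set (v # xs)" unfolding w_def by simp
  have P: "P \<subseteq> all_pairs n" unfolding P_def using dist vertices by (rule walk_edges_subset_all_pairs)
  have D: "D \<subseteq> all_pairs n" unfolding D_def using w vertices by (auto intro!: doubleton_in_all_pairs)
  have disj: "P \<inter> D = {}" unfolding D_def P_def using walk_edges_subset_vertices by fastforce
  have card_D: "card D = n - Suc (length xs)"
  proof -
    have "inj_on (\<lambda>u. {w, u}) ({..<n} - set (v # xs))"
      by (auto simp: inj_on_def doubleton_eq_iff)
    moreover have "card (set (v # xs)) = Suc (length xs)" using dist distinct_card by fastforce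
    ultimately show ?thesis unfolding D_def using vertices by (simp add: card_image card_Diff_subset)
  qed
  have indicator_le: "(if P \<subseteq> E \<and> real (deg E w) \<le> m then 1 else 0)
      \<le> 10 powr m * (if P \<subseteq> E then (1/10) ^ card (D \<inter> E) else 0)"
    if "E \<subseteq> all_pairs n" for E
  proof (cases "P \<subseteq> E \<and> real (deg E w) \<le> m")
    case True
    have "nbrs E w \<subseteq> {..<n}"
      using that by (auto simp: nbrs_def dest: doubleton_in_all_pairs_less)
    then have "finite (nbrs E w)" by (rule finite_subset) simp
    moreover have "D \<inter> E \<subseteq> (\<lambda>u. {w, u}) ` nbrs E w" unfolding D_def nbrs_def by auto
    ultimately have "card (D \<inter> E) \<le> deg E w"
      unfolding deg_def by (meson card_image_le card_mono finite_imageI order_trans)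
    then have "(10::real) ^ card (D \<inter> E) \<le> 10 powr m"
      using True by (simp add: powr_realpow[symmetric] powr_mono)
    then show ?thesis using True by (simp add: power_one_over field_simps)
  next
    case False
    then show ?thesis by (subst if_not_P) simp_all
  qed
  have "(\<Sum>E\<in>Pow (all_pairs n). graph_prob n p E * (if P \<subseteq> E \<and> real (deg E w) \<le> m then 1 else 0))
      \<le> (\<Sum>E\<in>Pow (all_pairs n). graph_prob n p E *
            (10 powr m * (if P \<subseteq> E then (1/10) ^ card (D \<inter> E) else 0)))"
    using indicator_le graph_prob_nonneg[OF p] by (intro sum_mono mult_left_mono) auto
  also have "\<dots> = 10 powr m * (\<Sum>E\<in>Pow (all_pairs n). graph_prob n p E *
            (if P \<subseteq> E then (1/10) ^ card (D \<inter> E) else 0))"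
    by (simp add: sum_distrib_left mult.left_commute)
  also have "\<dots> = 10 powr m * (p ^ card P * (1 - p + p * (1/10)) ^ card D)"
    by (simp only: sum_graph_prob_contains_weighted[OF P D disj])
  also have "\<dots> = 10 powr m * p ^ length xs * (1 - 9 * p / 10) ^ (n - Suc (length xs))"
    using dist by (simp add: P_def card_walk_edges card_D)
  finally show ?thesis unfolding P_def w_def .
qed

section \<open>The union bound over paths\<close>

lemma bad_within_le_count_low_degree_paths:
  assumes s: "s > 0" and E: "E \<subseteq> all_pairs n"
  shows "bad_within n p s E K {v}
    \<le> (\<Sum>l\<le>Suc K. \<Sum>xs\<in>{xs. set xs \<subseteq> {..<n} \<and> length xs = l}.
          if walk_edges v xs \<subseteq> E \<and> distinct (v # xs) \<and> real (deg E (last (v # xs))) \<le> real n * p / 10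
          then 1 else 0)"
    (is "_ \<le> (\<Sum>l\<le>Suc K. \<Sum>xs\<in>?L l. ?g xs)")
proof (cases "S0 n p E \<inter> path_ball E v (0 + K + 1) = {}")
  case True
  have "bad_within n p s E K {v} = 0"
    by (rule bad_within_eq_0_if_S0_far[OF _ True]) (simp add: center_in_path_ball)
  then show ?thesis by (simp add: sum_nonneg)
next
  case False
  then obtain w where w: "w \<in> S0 n p E" "w \<in> path_ball E v (Suc K)" by auto
  then obtain xs where xs: "w = last (v # xs)" "walk_edges v xs \<subseteq> E" "distinct (v # xs)"
      "length xs \<le> Suc K"
    unfolding path_ball_def by auto
  have "xs \<in> ?L (length xs)" using walk_vertices_less[OF xs(2) E] by simp
  moreover have "?g xs = 1" using xs w(1) unfolding S0_def by auto
  ultimately have "1 \<le> (\<Sum>ys\<in>?L (length xs). ?g ys)"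
    using member_le_sum[of xs "?L (length xs)" ?g] finite_lists_length_eq[of "{..<n}"] by simp
  also have "\<dots> \<le> (\<Sum>l\<le>Suc K. \<Sum>ys\<in>?L l. ?g ys)"
    using member_le_sum[of "length xs" "{..Suc K}" "\<lambda>l. \<Sum>ys\<in>?L l. ?g ys"] xs(4)
    by (simp add: sum_nonneg)
  finally show ?thesis using bad_within_between_0_1[OF s] by (meson order_trans)
qed

lemma sum_graph_prob_bad_within_le:
  fixes p s :: real
  assumes s: "s > 0" and p: "0 \<le> p" "p \<le> 1" and v: "v < n"
  shows "(\<Sum>E\<in>Pow (all_pairs n). graph_prob n p E * bad_within n p s E K {v})
     \<le> (\<Sum>l\<le>Suc K. real n ^ l * (10 powr (real n * p / 10) * p ^ l * (1 - 9 * p / 10) ^ (n - Suc l)))"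
proof -
  define m where "m = real n * p / 10"
  define L where "L l = {xs. set xs \<subseteq> {..<n} \<and> length xs = l}" for l
  define g where "g E xs = (if walk_edges v xs \<subseteq> E \<and> distinct (v # xs) \<and>
      real (deg E (last (v # xs))) \<le> m then 1 else (0::real))" for E xs
  have path_prob: "(\<Sum>E\<in>Pow (all_pairs n). graph_prob n p E * g E xs)
      \<le> 10 powr m * p ^ l * (1 - 9 * p / 10) ^ (n - Suc l)" if "xs \<in> L l" for xs l
  proof (cases "distinct (v # xs)")
    case True
    then show ?thesis
      using prob_path_with_low_degree_end[OF p True, of n m] that v by (simp add: g_def L_def)
  next
    case False
    then have "g E xs = 0" for E unfolding g_def by auto
    then show ?thesis using p by simp
  qed
  have "(\<Sum>E\<in>Pow (all_pairs n). graph_prob n p E * bad_within n p s E K {v})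
      \<le> (\<Sum>E\<in>Pow (all_pairs n). graph_prob n p E * (\<Sum>l\<le>Suc K. \<Sum>xs\<in>L l. g E xs))"
    using bad_within_le_count_low_degree_paths[OF s] graph_prob_nonneg[OF p]
    by (intro sum_mono mult_left_mono) (auto simp: L_def g_def m_def)
  also have "\<dots> = (\<Sum>E\<in>Pow (all_pairs n). \<Sum>l\<le>Suc K. \<Sum>xs\<in>L l. graph_prob n p E * g E xs)"
    by (simp only: sum_distrib_left)
  also have "\<dots> = (\<Sum>l\<le>Suc K. \<Sum>xs\<in>L l. \<Sum>E\<in>Pow (all_pairs n). graph_prob n p E * g E xs)"
    by (subst sum.swap) (intro sum.cong refl sum.swap)
  also have "\<dots> \<le> (\<Sum>l\<le>Suc K. \<Sum>xs\<in>L l. 10 powr m * p ^ l * (1 - 9 * p / 10) ^ (n - Suc l))"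
    by (intro sum_mono path_prob)
  also have "\<dots> = (\<Sum>l\<le>Suc K. real n ^ l * (10 powr m * p ^ l * (1 - 9 * p / 10) ^ (n - Suc l)))"
    by (simp add: L_def card_lists_length_eq)
  finally show ?thesis unfolding m_def .
qed

section \<open>Asymptotics\<close>

lemma ln_10_le_5: "ln (10::real) \<le> 5"
proof -
  have "ln (10::real) = ln 2 + ln 5" using ln_mult[of "2::real" 5] by simp
  moreover have "ln (5::real) \<le> 4" using ln_le_minus_one[of "5::real"] by simp
  ultimately show ?thesis using ln_2_less_1 by linarith
qed

lemma path_term_le:
  fixes n K l :: nat and a p A :: real
  assumes a: "a = real n * p" and p: "0 \<le> p" "p * (real K + 2) \<le> 1"
    and ln: "ln (real n) \<le> a" and a1: "1 \<le> a" and aA: "a \<le> A" and KA: "real K \<le> A powr (3/4)"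
    and l: "l \<le> Suc K"
  shows "real n ^ l * (10 powr (a / 10) * p ^ l * (1 - 9 * p / 10) ^ (n - Suc l))
     \<le> A powr (A powr (3/4) + 2) * (3 * exp (-(2/5) * ln (real n)))"
proof -
  have "p * 2 \<le> p * (real K + 2)" using p by (intro mult_left_mono) auto
  then have p_half: "p \<le> 1/2" using p by linarith
  have "real n ^ l * p ^ l = a ^ l" by (simp add: a power_mult_distrib)
  also have "\<dots> \<le> a ^ Suc K" using a1 l by (intro power_increasing) auto
  also have "\<dots> = a powr real (Suc K)" using a1 by (subst powr_realpow) auto
  also have "\<dots> \<le> A powr real (Suc K)" using a1 aA by (intro powr_mono2) auto
  also have "\<dots> \<le> A powr (A powr (3/4) + 2)" using a1 aA KA by (intro powr_mono) auto
  finally have path_count: "real n ^ l * p ^ l \<le> A powr (A powr (3/4) + 2)" .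
  have "(1 - 9 * p / 10) ^ (n - Suc l) \<le> exp (- 9 * p / 10) ^ (n - Suc l)"
    using p_half p exp_ge_add_one_self[of "- 9 * p / 10"] by (intro power_mono) auto
  also have "\<dots> = exp (real (n - Suc l) * (- 9 * p / 10))" by (rule exp_of_nat_mult[symmetric])
  also have "\<dots> \<le> exp ((real n - (real K + 2)) * (- 9 * p / 10))"
    using l p by (intro exp_mono mult_right_mono_neg) auto
  also have "\<dots> \<le> exp (- 9 * a / 10 + 1)"
  proof (intro exp_mono)
    have "(real n - (real K + 2)) * (- 9 * p / 10) = - 9 * a / 10 + 9/10 * (p * (real K + 2))"
      by (simp add: a field_simps)
    then show "(real n - (real K + 2)) * (- 9 * p / 10) \<le> - 9 * a / 10 + 1" using p by linarith
  qed
  finally have no_neighbour: "(1 - 9 * p / 10) ^ (n - Suc l) \<le> exp (- 9 * a / 10 + 1)" .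
  have "10 powr (a / 10) = exp (a / 10 * ln 10)" by (simp add: powr_def)
  also have "\<dots> \<le> exp (a / 2)" using ln_10_le_5 a1 by (intro exp_mono) (auto simp: field_simps)
  finally have markov_factor: "10 powr (a / 10) \<le> exp (a / 2)" .
  have "exp (a / 2) * exp (- 9 * a / 10 + 1) = exp 1 * exp (-(2/5) * a)"
    by (simp add: exp_add[symmetric])
  also have "\<dots> \<le> 3 * exp (-(2/5) * ln (real n))"
    using ln exp_le by (intro mult_mono) auto
  finally have decay: "exp (a / 2) * exp (- 9 * a / 10 + 1) \<le> 3 * exp (-(2/5) * ln (real n))" .
  have "real n ^ l * (10 powr (a / 10) * p ^ l * (1 - 9 * p / 10) ^ (n - Suc l))
      = (real n ^ l * p ^ l) * (10 powr (a / 10) * (1 - 9 * p / 10) ^ (n - Suc l))" by simp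
  also have "\<dots> \<le> A powr (A powr (3/4) + 2) * (exp (a / 2) * exp (- 9 * a / 10 + 1))"
    using path_count no_neighbour markov_factor p p_half by (intro mult_mono) (auto simp: a)
  also have "\<dots> \<le> A powr (A powr (3/4) + 2) * (3 * exp (-(2/5) * ln (real n)))"
    using decay by (intro mult_left_mono) auto
  finally show ?thesis .
qed

lemma omega0_between_0_np:
  assumes np: "3 \<le> real n * p" and lnlnln: "1 \<le> ln (ln (ln (real n)))"
  shows "0 \<le> omega0 n p" "omega0 n p \<le> real n * p"
proof -
  define a where "a = real n * p"
  define eps where "eps = 1 / ln (ln (ln (real n)))"
  have eps2: "0 \<le> eps ^ 2" "eps ^ 2 \<le> 1" using lnlnln by (auto simp: eps_def power_le_one)
  have "exp 1 \<le> a" using exp_le np by (simp add: a_def)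
  then have ln_a: "1 \<le> ln a" using np by (subst ln_ge_iff) (auto simp: a_def)
  have omega0: "omega0 n p = eps ^ 2 * a / (100 * ln a)"
    unfolding omega0_def eps_def a_def Let_def by simp
  show "0 \<le> omega0 n p" using omega0 eps2 np ln_a by (simp add: a_def)
  have "eps ^ 2 * a * 1 \<le> eps ^ 2 * a * (100 * ln a)"
    using eps2 np ln_a by (intro mult_left_mono) (auto simp: a_def)
  then have "eps ^ 2 * a / (100 * ln a) \<le> eps ^ 2 * a"
    using ln_a by (subst pos_divide_le_eq) auto
  also have "\<dots> \<le> a" using eps2 np by (simp add: a_def mult_left_le_one_le)
  finally show "omega0 n p \<le> real n * p" using omega0 by (simp add: a_def)
qed

lemma failure_prob_bounds:
  fixes p s A :: real
  assumes s: "s > 0" and v: "v < n" and p: "0 \<le> p"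
    and ln_le_np: "ln (real n) \<le> real n * p" and np: "3 \<le> real n * p" and np_le_A: "real n * p \<le> A"
    and lnlnln: "1 \<le> ln (ln (ln (real n)))" and A: "A * (A powr (3/4) + 2) / real n \<le> 1"
  shows "0 \<le> failure_prob n p s v \<and> failure_prob n p s v
    \<le> (A powr (3/4) + 3) * A powr (A powr (3/4) + 2) * (3 * exp (-(2/5) * ln (real n)))"
proof -
  define K where "K = nat \<lfloor>omega0 n p powr (3/4)\<rfloor>"
  have n: "real n > 0" using v by simp
  have KA: "real K \<le> A powr (3/4)"
  proof -
    have "real K \<le> omega0 n p powr (3/4)"
      using omega0_between_0_np[OF np lnlnln] by (simp add: K_def of_nat_nat)
    also have "\<dots> \<le> (real n * p) powr (3/4)"
      using omega0_between_0_np[OF np lnlnln] by (intro powr_mono2) auto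
    also have "\<dots> \<le> A powr (3/4)" using np np_le_A by (intro powr_mono2) auto
    finally show ?thesis .
  qed
  have "p \<le> A / real n" using np_le_A n by (simp add: field_simps)
  then have "p * (real K + 2) \<le> A / real n * (A powr (3/4) + 2)"
    using KA p by (intro mult_mono) auto
  then have pK: "p * (real K + 2) \<le> 1" using A by simp
  have "p * 2 \<le> p * (real K + 2)" using p by (intro mult_left_mono) auto
  then have p1: "p \<le> 1" using pK by linarith
  have "failure_prob n p s v
      \<le> (\<Sum>l\<le>Suc K. real n ^ l * (10 powr (real n * p / 10) * p ^ l * (1 - 9 * p / 10) ^ (n - Suc l)))"
    unfolding failure_prob_def K_def by (rule sum_graph_prob_bad_within_le[OF s p p1 v])
  also have "\<dots> \<le> (\<Sum>l\<le>Suc K. A powr (A powr (3/4) + 2) * (3 * exp (-(2/5) * ln (real n))))"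
    using np by (intro sum_mono path_term_le[OF refl p pK ln_le_np _ np_le_A KA]) auto
  also have "\<dots> \<le> (A powr (3/4) + 3) * A powr (A powr (3/4) + 2) * (3 * exp (-(2/5) * ln (real n)))"
    using KA by (simp, intro mult_right_mono) auto
  finally have "failure_prob n p s v \<le> \<dots>" .
  moreover have "0 \<le> failure_prob n p s v"
    unfolding failure_prob_def using bad_within_between_0_1[OF s] graph_prob_nonneg[OF p p1]
    by (intro sum_nonneg mult_nonneg_nonneg) auto
  ultimately show ?thesis by simp
qed

lemma failure_prob_tendsto_0:
  fixes p :: "nat \<Rightarrow> real" and v :: "nat \<Rightarrow> nat"
  assumes s: "s > 0" and v: "eventually (\<lambda>n. v n < n) sequentially"
    and ln_le_np: "eventually (\<lambda>n. ln (real n) \<le> real n * p n) sequentially"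
    and np_bigo: "(\<lambda>n. real n * p n) \<in> O(\<lambda>n. ln (real n))"
  shows "(\<lambda>n. failure_prob n (p n) s (v n)) \<longlonglongrightarrow> 0"
proof -
  \<comment> \<open>\<open>A n\<close> eventually dominates every constant multiple of \<open>ln n\<close>, hence \<open>np\<close>\<close>
  define A where "A n = ln (real n) powr (11/10)" for n :: nat
  define G where "G n = (A n powr (3/4) + 3) * A n powr (A n powr (3/4) + 2) *
      (3 * exp (-(2/5) * ln (real n)))" for n
  obtain c where "eventually (\<lambda>n. norm (real n * p n) \<le> c * norm (ln (real n))) sequentially"
    using np_bigo by (elim landau_o.bigE)
  moreover have "eventually (\<lambda>n. c * ln (real n) \<le> A n) sequentially"
    unfolding A_def by real_asymp
  moreover have "eventually (\<lambda>n::nat. 3 \<le> ln (real n)) sequentially" by real_asymp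
  moreover have "eventually (\<lambda>n::nat. 1 \<le> ln (ln (ln (real n)))) sequentially" by real_asymp
  moreover have "eventually (\<lambda>n. A n * (A n powr (3/4) + 2) / real n \<le> 1) sequentially"
    unfolding A_def by real_asymp
  ultimately have bounds: "eventually (\<lambda>n. 0 \<le> failure_prob n (p n) s (v n) \<and>
      failure_prob n (p n) s (v n) \<le> G n) sequentially"
    using v ln_le_np
  proof eventually_elim
    case (elim n)
    then have "real n > 0" by (cases n) auto
    then have "0 \<le> p n" using elim(3,7) zero_le_mult_iff[of "real n" "p n"] by linarith
    then show ?case unfolding G_def using s elim by (intro failure_prob_bounds) auto
  qed
  have "G \<longlonglongrightarrow> 0" unfolding G_def A_def by real_asymp
  then show ?thesis
  proof (rule tendsto_sandwich[of "\<lambda>_. 0", rotated 3])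
    show "eventually (\<lambda>n. 0 \<le> failure_prob n (p n) s (v n)) sequentially"
      "eventually (\<lambda>n. failure_prob n (p n) s (v n) \<le> G n) sequentially"
      using bounds by (auto elim: eventually_mono)
  qed simp
qed

theorem mainTheorem9:
  fixes s :: real and \<omega> p :: "nat \<Rightarrow> real" and v0 :: "nat \<Rightarrow> nat"
  assumes "s > 1"
    and "filterlim \<omega> at_top sequentially"
    and "\<And>n. p n = (ln (real n) + \<omega> n) / real n"
    and "(\<lambda>n. real n * p n) \<in> O(\<lambda>n. ln (real n))"
    and "\<And>n. n \<ge> 1 \<Longrightarrow> v0 n < n"
  shows "(\<lambda>n. failure_prob n (p n) s (v0 n)) \<longlonglongrightarrow> 0"
proof (rule failure_prob_tendsto_0)
  show "eventually (\<lambda>n. v0 n < n) sequentially"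
    using eventually_ge_at_top[of 1] by (rule eventually_mono) (rule assms(5))
  have "eventually (\<lambda>n. 0 \<le> \<omega> n) sequentially"
    using assms(2) by (simp add: filterlim_at_top)
  moreover have "eventually (\<lambda>n. 1 \<le> n) sequentially" by (rule eventually_ge_at_top)
  ultimately show "eventually (\<lambda>n. ln (real n) \<le> real n * p n) sequentially"
    by eventually_elim (simp add: assms(3))
qed (use assms(1,4) in auto)

end
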